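(* Let $p\ge1$ and let $\mathbf W$ be a $p$-dimensional standard Brownian motion. For any fixed $M>0$, $$\mathbb P\Big(\sup_{1\le s\le t<\infty}t^{-\frac32}\|t\mathbf W(s)-s\mathbf W(t)\|_{I_p}\ge M\Big)=1.$$
   Context: For $\mathbf y\in\mathbb R^p$, $\|\mathbf y\|_{I_p}=\sqrt{\mathbf y^\top\mathbf y/p}$, i.e. the Euclidean norm divided by $\sqrt p$. *)

theory Defs
  imports "HOL-Probability.Probability"
begin

definition normI :: "real ^ 'p \<Rightarrow> real" where
  "normI y = sqrt ((y \<bullet> y) / real CARD('p))"

definition std_brownian_motion :: "'a measure \<Rightarrow> (real \<Rightarrow> 'a \<Rightarrow> real ^ 'p) \<Rightarrow> bool" where
  "std_brownian_motion M W \<longleftrightarrow>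
     prob_space M \<and>
     (\<forall>t\<ge>0. W t \<in> borel_measurable M) \<and>
     (\<forall>\<omega>\<in>space M. W 0 \<omega> = 0) \<and>
     (\<forall>\<omega>\<in>space M. continuous_on {0..} (\<lambda>t. W t \<omega>)) \<and>
     (\<forall>s t. 0 \<le> s \<and> s < t \<longrightarrow>
        distributed M lborel (\<lambda>\<omega>. W t \<omega> - W s \<omega>)
          (\<lambda>x. ennreal (\<Prod>i\<in>UNIV. normal_density 0 (sqrt (t - s)) (x $ i)))) \<and>
     (\<forall>(ts :: nat \<Rightarrow> real) n. 0 \<le> ts 0 \<and> (\<forall>i<n. ts i < ts (Suc i)) \<longrightarrow>
        prob_space.indep_vars M (\<lambda>_. borel) (\<lambda>i \<omega>. W (ts (Suc i)) \<omega> - W (ts i) \<omega>) {..<n})"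

end

theory Submission
  imports Defs
begin

(* For s >= 1 the identity
     s ((W(2s) - W(s)) - (W(3s) - W(2s))) = (3s W(s) - s W(3s)) - 2 (2s W(s) - s W(2s))
   shows that if the supremum were below K, every second difference of W over s, 2s, 3s
   would have norm at most C sqrt s, with C = 12 K sqrt p.  On the scales s = 3^k the
   increments over [3^k, 2 3^k] and [2 3^k, 3^(k+1)] are independent N(0, 3^k I_p) vectors,
   so by Brownian scaling the events "the first increment has norm > (C+1) sqrt s and the
   second has norm <= sqrt s" are independent and have one common positive probability.
   Almost surely one of them occurs, and then the second difference exceeds C sqrt s. *)

section \<open>Suprema over dense subsets\<close>

lemma SUP_eq_SUP_dense_subset:
  fixes f :: "'a::topological_space \<Rightarrow> 'b::{complete_linorder,linorder_topology}"
  assumes f: "continuous_on R f" and D: "D \<subseteq> R" "R \<subseteq> closure D"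
  shows "(SUP x\<in>R. f x) = (SUP x\<in>D. f x)"
proof (rule antisym)
  show "(SUP x\<in>R. f x) \<le> (SUP x\<in>D. f x)"
  proof (rule SUP_least)
    fix x assume x: "x \<in> R"
    show "f x \<le> (SUP x\<in>D. f x)"
    proof (cases "x \<in> D")
      case False
      with x D have "\<not> trivial_limit (at x within D)"
        by (auto simp: trivial_limit_within closure_def)
      moreover have "(f \<longlongrightarrow> f x) (at x within D)"
        using f x D(1) by (meson continuous_on_def tendsto_within_subset)
      moreover have "eventually (\<lambda>y. f y \<le> (SUP x\<in>D. f x)) (at x within D)"
        by (auto simp: eventually_at_filter intro!: always_eventually SUP_upper)
      ultimately show ?thesis
        by (intro tendsto_upperbound)
    qed (rule SUP_upper)
  qed
  show "(SUP x\<in>D. f x) \<le> (SUP x\<in>R. f x)"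
    using D(1) by (rule SUP_subset_mono) simp
qed

lemma wedge_subset_closure_rational_pairs:
  "{(s, t). 1 \<le> s \<and> s \<le> (t::real)} \<subseteq> closure {(s, t). s \<in> \<rat> \<and> t \<in> \<rat> \<and> 1 \<le> s \<and> s \<le> t}"
proof (rule subsetI)
  fix x assume "x \<in> {(s, t). 1 \<le> s \<and> s \<le> (t::real)}"
  then obtain s t where x: "x = (s, t)" "1 \<le> s" "s \<le> t" by auto
  show "x \<in> closure {(s, t). s \<in> \<rat> \<and> t \<in> \<rat> \<and> 1 \<le> s \<and> s \<le> t}"
    unfolding closure_approachable
  proof (intro allI impI)
    fix d :: real assume d: "d > 0"
    obtain q1 where q1: "q1 \<in> \<rat>" "s < q1" "q1 < s + d/4"
      using Rats_dense_in_real[of s "s + d/4"] d by auto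
    obtain q2 where q2: "q2 \<in> \<rat>" "t + d/4 < q2" "q2 < t + d/2"
      using Rats_dense_in_real[of "t + d/4" "t + d/2"] d by auto
    have "dist (q1, q2) (s, t) \<le> dist q1 s + dist q2 t"
      using sqrt_sum_squares_le_sum_abs[of "dist q1 s" "dist q2 t"] by (simp add: dist_Pair_Pair)
    also have "\<dots> < d" using q1 q2 d by (simp add: dist_real_def)
    finally show "\<exists>y\<in>{(s, t). s \<in> \<rat> \<and> t \<in> \<rat> \<and> 1 \<le> s \<and> s \<le> t}. dist y x < d"
      using x q1 q2 by (intro bexI[of _ "(q1, q2)"]) auto
  qed
qed

section \<open>Second differences of paths with small scaled bridge supremum\<close>

lemma normI_eq_norm_divide: "normI y = norm y / sqrt (real CARD('p))"
  for y :: "real ^ 'p"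
  unfolding normI_def by (simp add: real_sqrt_divide norm_eq_sqrt_inner)

lemma powr_minus_three_halves: "t > 0 \<Longrightarrow> t powr (-3/2) = 1 / (t * sqrt t)"
proof -
  assume t: "t > 0"
  have "t powr (3/2) = t powr (1 + 1/2)" by simp
  also have "\<dots> = t * sqrt t" using t by (simp only: powr_add powr_half_sqrt powr_one)
  finally show ?thesis using t by (simp add: powr_minus_divide)
qed

lemma powr_minus_three_halves_normI_less_iff:
  fixes v :: "real ^ 'p"
  assumes "t > 0"
  shows "t powr (-3/2) * normI v < K \<longleftrightarrow> norm v < K * sqrt (real CARD('p)) * (t * sqrt t)"
proof -
  have "t * sqrt t * sqrt (real CARD('p)) > 0" using assms by simp
  then show ?thesis
    unfolding powr_minus_three_halves[OF assms] normI_eq_norm_divide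
    by (simp add: divide_less_eq ac_simps)
qed

lemma second_difference_bound:
  fixes w :: "real \<Rightarrow> 'v::real_normed_vector"
  assumes s: "s > 0"
    and bound2: "norm ((2 * s) *\<^sub>R w s - s *\<^sub>R w (2 * s)) \<le> L * ((2 * s) * sqrt (2 * s))"
    and bound3: "norm ((3 * s) *\<^sub>R w s - s *\<^sub>R w (3 * s)) \<le> L * ((3 * s) * sqrt (3 * s))"
  shows "norm ((w (2 * s) - w s) - (w (3 * s) - w (2 * s))) \<le> 12 * L * sqrt s"
proof -
  have "0 < (2 * s) * sqrt (2 * s)" using s by simp
  then have L: "L \<ge> 0"
    using order.trans[OF norm_ge_zero bound2] by (simp add: zero_le_mult_iff)
  have "s *\<^sub>R ((w (2 * s) - w s) - (w (3 * s) - w (2 * s))) =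
      ((3 * s) *\<^sub>R w s - s *\<^sub>R w (3 * s)) - 2 *\<^sub>R ((2 * s) *\<^sub>R w s - s *\<^sub>R w (2 * s))"
    by (simp add: algebra_simps flip: scaleR_add_left)
  then have "s * norm ((w (2 * s) - w s) - (w (3 * s) - w (2 * s))) \<le>
      norm ((3 * s) *\<^sub>R w s - s *\<^sub>R w (3 * s)) + 2 * norm ((2 * s) *\<^sub>R w s - s *\<^sub>R w (2 * s))"
    using s norm_triangle_ineq4 by (metis abs_of_pos norm_scaleR real_norm_def norm_numeral)
  also have "\<dots> \<le> L * s * sqrt s * (3 * sqrt 3 + 4 * sqrt 2)"
    using bound2 bound3 by (simp add: real_sqrt_mult algebra_simps)
  also have "\<dots> \<le> L * s * sqrt s * 12"
  proof (rule mult_left_mono)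
    have "sqrt 3 \<le> 2" by (rule real_le_lsqrt) auto
    moreover have "sqrt 2 \<le> 3/2" by (rule real_le_lsqrt) (auto simp: power2_eq_square)
    ultimately show "3 * sqrt 3 + 4 * sqrt 2 \<le> 12" by linarith
  qed (use L s in simp)
  finally show ?thesis
    using s by (simp add: algebra_simps)
qed

definition scaled_bridge_sup :: "(real \<Rightarrow> real ^ 'p) \<Rightarrow> ereal" where
  "scaled_bridge_sup w =
     (SUP (s, t) \<in> {(s, t). 1 \<le> s \<and> s \<le> t}. ereal (t powr (-3/2) * normI (t *\<^sub>R w s - s *\<^sub>R w t)))"

lemma scaled_bridge_sup_ge_if_large_then_small_increment:
  fixes w :: "real \<Rightarrow> real ^ 'p"
  assumes s: "1 \<le> s"
    and large: "norm (w (2 * s) - w s) > (12 * K * sqrt (real CARD('p)) + 1) * sqrt s"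
    and small: "norm (w (3 * s) - w (2 * s)) \<le> sqrt s"
  shows "ereal K \<le> scaled_bridge_sup w"
proof (rule ccontr)
  assume "\<not> ereal K \<le> scaled_bridge_sup w"
  then have sup: "scaled_bridge_sup w < ereal K" by simp
  have bound: "norm (v *\<^sub>R w u - u *\<^sub>R w v) \<le> K * sqrt (real CARD('p)) * (v * sqrt v)"
    if "1 \<le> u" "u \<le> v" for u v
  proof -
    have "ereal (v powr (-3/2) * normI (v *\<^sub>R w u - u *\<^sub>R w v)) \<le> scaled_bridge_sup w"
      unfolding scaled_bridge_sup_def using that by (intro SUP_upper2[of "(u, v)"]) auto
    then have "ereal (v powr (-3/2) * normI (v *\<^sub>R w u - u *\<^sub>R w v)) < ereal K"
      using sup by (rule le_less_trans)
    then have "v powr (-3/2) * normI (v *\<^sub>R w u - u *\<^sub>R w v) < K" by simp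
    moreover have "v > 0" using that by simp
    ultimately show ?thesis by (metis powr_minus_three_halves_normI_less_iff less_imp_le)
  qed
  have "norm ((w (2 * s) - w s) - (w (3 * s) - w (2 * s))) \<le> 12 * (K * sqrt (real CARD('p))) * sqrt s"
    using s by (intro second_difference_bound bound) auto
  moreover have "norm (w (2 * s) - w s) - norm (w (3 * s) - w (2 * s))
      \<le> norm ((w (2 * s) - w s) - (w (3 * s) - w (2 * s)))"
    by (rule norm_triangle_ineq2)
  ultimately show False
    using large small by (simp add: algebra_simps)
qed

lemma borel_measurable_scaled_bridge_sup:
  fixes W :: "real \<Rightarrow> 'a \<Rightarrow> real ^ 'p"
  assumes meas: "\<And>t. t \<ge> 0 \<Longrightarrow> W t \<in> borel_measurable M"
    and cont: "\<And>\<omega>. \<omega> \<in> space M \<Longrightarrow> continuous_on {0..} (\<lambda>t. W t \<omega>)"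
  shows "(\<lambda>\<omega>. scaled_bridge_sup (\<lambda>t. W t \<omega>)) \<in> borel_measurable M"
proof -
  define R where "R = {(s, t). 1 \<le> s \<and> s \<le> (t::real)}"
  define D where "D = {(s, t). s \<in> \<rat> \<and> t \<in> \<rat> \<and> 1 \<le> s \<and> s \<le> (t::real)}"
  define g where "g \<omega> = (\<lambda>(s, t). ereal (t powr (-3/2) * normI (t *\<^sub>R W s \<omega> - s *\<^sub>R W t \<omega>)))" for \<omega>
  have "scaled_bridge_sup (\<lambda>t. W t \<omega>) = (SUP x\<in>D. g \<omega> x)" if \<omega>: "\<omega> \<in> space M" for \<omega>
  proof -
    have "continuous_on R (\<lambda>x. W (fst x) \<omega>)" "continuous_on R (\<lambda>x. W (snd x) \<omega>)"
      by (auto simp: R_def intro!: continuous_on_compose2[OF cont[OF \<omega>]] continuous_on_fst continuous_on_snd)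
    then have "continuous_on R (g \<omega>)"
      unfolding g_def case_prod_beta' normI_eq_norm_divide
      by (intro continuous_intros) (auto simp: R_def)
    moreover have "D \<subseteq> R" "R \<subseteq> closure D"
      using wedge_subset_closure_rational_pairs by (auto simp: R_def D_def)
    ultimately show ?thesis
      unfolding scaled_bridge_sup_def g_def[symmetric] R_def[symmetric]
      by (rule SUP_eq_SUP_dense_subset)
  qed
  moreover have "countable D"
    by (rule countable_subset[of _ "\<rat> \<times> \<rat>"]) (auto simp: D_def countable_rat)
  moreover have "(\<lambda>\<omega>. g \<omega> x) \<in> borel_measurable M" if "x \<in> D" for x
  proof -
    have [measurable]: "W (fst x) \<in> borel_measurable M" "W (snd x) \<in> borel_measurable M"
      using that by (auto simp: D_def intro!: meas)
    show ?thesis unfolding g_def case_prod_beta' normI_eq_norm_divide by measurable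
  qed
  ultimately show ?thesis
    by (subst measurable_cong) (auto intro: borel_measurable_SUP)
qed

section \<open>Standard Gaussian vectors\<close>

definition std_normal_vec :: "(real ^ 'p) measure" where
  "std_normal_vec = density lborel (\<lambda>y. ennreal (\<Prod>i\<in>UNIV. std_normal_density (y $ i)))"

lemma prod_UNIV_eq_prod_Basis_vec:
  "(\<Prod>i\<in>UNIV. f (x $ i)) = (\<Prod>b\<in>Basis. f (x \<bullet> b))" for x :: "real ^ 'n"
proof -
  have inj: "inj (\<lambda>i. axis i (1::real) :: real ^ 'n)"
    by (auto simp: inj_def axis_eq_axis)
  have "(\<Prod>b\<in>Basis. f (x \<bullet> b)) = (\<Prod>b\<in>range (\<lambda>i. axis i (1::real)). f (x \<bullet> b))"
    by (simp add: Basis_vec_def UNION_singleton_eq_range)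
  also have "\<dots> = (\<Prod>i\<in>UNIV. f (x \<bullet> axis i 1))"
    using inj by (simp add: prod.reindex)
  finally show ?thesis
    by (simp add: inner_axis)
qed

lemma prob_space_std_normal_vec: "prob_space (std_normal_vec :: (real ^ 'p) measure)"
proof
  have "emeasure (std_normal_vec :: (real ^ 'p) measure) (space std_normal_vec)
      = (\<integral>\<^sup>+ y. ennreal (\<Prod>b\<in>Basis. std_normal_density ((y :: real ^ 'p) \<bullet> b)) \<partial>lborel)"
    by (simp add: std_normal_vec_def emeasure_density prod_UNIV_eq_prod_Basis_vec)
  also have "\<dots> = (\<integral>\<^sup>+ y. (\<Prod>b\<in>Basis. ennreal (std_normal_density ((y :: real ^ 'p) \<bullet> b))) \<partial>lborel)"
    by (simp add: prod_ennreal normal_density_nonneg)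
  also have "\<dots> = (\<Prod>b\<in>(Basis :: (real ^ 'p) set). \<integral>\<^sup>+ x. ennreal (std_normal_density x) \<partial>lborel)"
    by (rule nn_integral_lborel_prod) auto
  also have "\<dots> = 1"
    by (subst nn_integral_eq_integral) (auto simp: normal_density_nonneg)
  finally show "emeasure (std_normal_vec :: (real ^ 'p) measure) (space std_normal_vec) = 1" .
qed

lemma normal_density_scale:
  assumes "\<sigma> > 0"
  shows "normal_density 0 \<sigma> (\<sigma> * u) = std_normal_density u / \<sigma>"
  using assms by (simp add: normal_density_def real_sqrt_mult field_simps)

lemma measure_std_normal_vec_pos:
  fixes B :: "(real ^ 'p) set"
  assumes B: "B \<in> sets borel" and ball: "ball c r \<subseteq> B" and r: "r > 0"
  shows "measure std_normal_vec B > 0"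
proof -
  have "emeasure std_normal_vec B \<noteq> 0"
  proof
    assume "emeasure std_normal_vec B = 0"
    then have "(\<integral>\<^sup>+ y. ennreal (\<Prod>i\<in>UNIV. std_normal_density (y $ i)) * indicator B y \<partial>lborel) = 0"
      using B by (simp add: std_normal_vec_def emeasure_density)
    then have "AE y in lborel. ennreal (\<Prod>i\<in>UNIV. std_normal_density (y $ i)) * indicator B y = 0"
      using B by (subst (asm) nn_integral_0_iff_AE) auto
    then have "AE y in lborel. y \<notin> B"
    proof (rule eventually_mono)
      fix y :: "real ^ 'p"
      assume "ennreal (\<Prod>i\<in>UNIV. std_normal_density (y $ i)) * indicator B y = 0"
      moreover have "(\<Prod>i\<in>UNIV. std_normal_density (y $ i)) > 0"
        by (intro prod_pos) (simp add: normal_density_pos)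
      ultimately show "y \<notin> B"
        by (auto simp: indicator_def simp del: prod_zero_iff)
    qed
    then have "emeasure lborel B = 0"
      using B by (subst (asm) AE_iff_measurable[of B]) auto
    then have "emeasure lborel (ball c r) = 0"
      using B ball by (metis emeasure_mono le_zero_eq sets_lborel)
    with content_ball_pos[OF r, of c] show False
      by (simp add: measure_def)
  qed
  then show ?thesis
    using finite_measure.emeasure_eq_measure[OF prob_space.finite_measure[OF prob_space_std_normal_vec], of B]
    by (simp add: zero_less_measure_iff)
qed

lemma emeasure_distributed_normal_vec_scaled:
  fixes X :: "'a \<Rightarrow> real ^ 'p"
  assumes X: "distributed M lborel X (\<lambda>x. ennreal (\<Prod>i\<in>UNIV. normal_density 0 \<sigma> (x $ i)))"
    and \<sigma>: "\<sigma> > 0" and B: "B \<in> sets borel"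
  shows "emeasure M {\<omega> \<in> space M. X \<omega> /\<^sub>R \<sigma> \<in> B} = emeasure std_normal_vec B"
proof -
  let ?f = "\<lambda>x. ennreal (\<Prod>i\<in>UNIV. normal_density 0 \<sigma> (x $ i))"
  define A where "A = {x. x /\<^sub>R \<sigma> \<in> B}"
  have A_borel: "A \<in> sets borel" unfolding A_def using B by measurable
  have "emeasure M {\<omega> \<in> space M. X \<omega> /\<^sub>R \<sigma> \<in> B} = emeasure (distr M lborel X) A"
    using A_borel distributed_measurable[OF X]
    by (simp add: emeasure_distr A_def vimage_def Int_def conj_commute)
  also have "\<dots> = (\<integral>\<^sup>+ x. ?f x * indicator A x \<partial>lborel)"
    using A_borel by (simp add: distributed_distr_eq_density[OF X] emeasure_density)
  also have "\<dots> = (\<integral>\<^sup>+ x. ?f x * indicator A x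
       \<partial>density (distr lborel borel (\<lambda>x. 0 + \<sigma> *\<^sub>R x)) (\<lambda>_. \<bar>\<sigma>\<bar> ^ DIM(real ^ 'p)))"
    using lborel_affine[of \<sigma> "0 :: real ^ 'p"] \<sigma> by simp
  also have "\<dots> = (\<integral>\<^sup>+ y. ennreal (\<sigma> ^ CARD('p)) * (?f (\<sigma> *\<^sub>R y) * indicator A (\<sigma> *\<^sub>R y)) \<partial>lborel)"
    using A_borel \<sigma> by (simp add: nn_integral_density nn_integral_distr)
  also have "\<dots> = (\<integral>\<^sup>+ y. ennreal (\<Prod>i\<in>UNIV. std_normal_density (y $ i)) * indicator B y \<partial>lborel)"
  proof (rule nn_integral_cong)
    fix y :: "real ^ 'p"
    have "\<sigma> ^ CARD('p) * (\<Prod>i\<in>UNIV. normal_density 0 \<sigma> (\<sigma> * y $ i))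
        = \<sigma> ^ CARD('p) * ((\<Prod>i\<in>UNIV. std_normal_density (y $ i)) / \<sigma> ^ CARD('p))"
      using \<sigma> by (simp add: normal_density_scale prod_dividef)
    also have "\<dots> = (\<Prod>i\<in>UNIV. std_normal_density (y $ i))"
      using \<sigma> by simp
    finally show "ennreal (\<sigma> ^ CARD('p)) * (?f (\<sigma> *\<^sub>R y) * indicator A (\<sigma> *\<^sub>R y))
        = ennreal (\<Prod>i\<in>UNIV. std_normal_density (y $ i)) * indicator B y"
      using \<sigma> by (auto simp: A_def indicator_def prod_nonneg mult.assoc[symmetric]
          ennreal_mult'[symmetric])
  qed
  also have "\<dots> = emeasure std_normal_vec B"
    using B by (simp add: std_normal_vec_def emeasure_density)
  finally show ?thesis .
qed

section \<open>Independent pair events\<close>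

lemma (in prob_space) indep_vars_prob_pair:
  assumes indep: "indep_vars N X I" and ij: "i \<in> I" "j \<in> I" "i \<noteq> j"
    and A: "A \<in> sets (N i)" and B: "B \<in> sets (N j)"
  shows "prob {\<omega> \<in> space M. X i \<omega> \<in> A \<and> X j \<omega> \<in> B}
    = prob {\<omega> \<in> space M. X i \<omega> \<in> A} * prob {\<omega> \<in> space M. X j \<omega> \<in> B}"
proof -
  define C where "C l = (if l = i then A else B)" for l
  have "prob (\<Inter>l\<in>{i, j}. X l -` C l \<inter> space M) = (\<Prod>l\<in>{i, j}. prob (X l -` C l \<inter> space M))"
    by (rule indep_varsD[OF indep]) (use ij A B in \<open>auto simp: C_def\<close>)
  then show ?thesis
    using ij by (simp add: C_def Int_def vimage_def conj_commute conj_left_commute)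
qed

lemma (in prob_space) indep_vars_pair_events:
  fixes X :: "nat \<Rightarrow> 'a \<Rightarrow> 'b" and n :: nat
  assumes indep: "indep_vars N X {..<2 * n}"
    and A: "\<And>k. k < n \<Longrightarrow> A k \<in> sets (N (2 * k))"
    and B: "\<And>k. k < n \<Longrightarrow> B k \<in> sets (N (2 * k + 1))"
  shows "indep_vars (\<lambda>_. count_space UNIV) (\<lambda>k \<omega>. X (2 * k) \<omega> \<in> A k \<and> X (2 * k + 1) \<omega> \<in> B k) {..<n}"
proof -
  define K where "K k = {2 * k, 2 * k + 1}" for k :: nat
  define Y where "Y k f \<longleftrightarrow> f (2 * k) \<in> A k \<and> f (2 * k + 1) \<in> B k" for k f
  have "indep_vars (\<lambda>k. PiM (K k) N) (\<lambda>k \<omega>. restrict (\<lambda>i. X i \<omega>) (K k)) {..<n}"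
    by (rule indep_vars_restrict[OF indep]) (auto simp: K_def disjoint_family_on_def)
  then have "indep_vars (\<lambda>_. count_space UNIV) (\<lambda>k \<omega>. Y k (restrict (\<lambda>i. X i \<omega>) (K k))) {..<n}"
  proof (rule indep_vars_compose2)
    fix k assume "k \<in> {..<n}"
    then have [measurable]: "A k \<in> sets (N (2 * k))" "B k \<in> sets (N (2 * k + 1))"
      using A B by auto
    have [measurable]: "(\<lambda>f. f (2 * k)) \<in> measurable (PiM (K k) N) (N (2 * k))"
      "(\<lambda>f. f (2 * k + 1)) \<in> measurable (PiM (K k) N) (N (2 * k + 1))"
      by (auto simp: K_def intro!: measurable_component_singleton)
    show "Y k \<in> measurable (PiM (K k) N) (count_space UNIV)"
      unfolding Y_def pred_def[symmetric] by measurable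
  qed
  then show ?thesis
    by (simp add: Y_def K_def)
qed

lemma (in prob_space) prob_no_independent_pair_event:
  fixes X :: "nat \<Rightarrow> 'a \<Rightarrow> 'b" and n :: nat
  assumes indep: "indep_vars N X {..<2 * n}"
    and A: "\<And>k. k < n \<Longrightarrow> A k \<in> sets (N (2 * k))"
    and B: "\<And>k. k < n \<Longrightarrow> B k \<in> sets (N (2 * k + 1))"
  shows "prob {\<omega> \<in> space M. \<forall>k<n. \<not> (X (2 * k) \<omega> \<in> A k \<and> X (2 * k + 1) \<omega> \<in> B k)}
    = (\<Prod>k<n. 1 - prob {\<omega> \<in> space M. X (2 * k) \<omega> \<in> A k} * prob {\<omega> \<in> space M. X (2 * k + 1) \<omega> \<in> B k})"
proof (cases "n = 0")
  case True
  then show ?thesis by (simp add: prob_space)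
next
  case False
  define Z where "Z k \<omega> \<longleftrightarrow> X (2 * k) \<omega> \<in> A k \<and> X (2 * k + 1) \<omega> \<in> B k" for k \<omega>
  have indep_Z: "indep_vars (\<lambda>_. count_space UNIV) Z {..<n}"
    unfolding Z_def[abs_def] using indep A B by (rule indep_vars_pair_events)
  have "Z k -` {False} \<inter> space M = space M - {\<omega> \<in> space M. Z k \<omega>}" for k
    by blast
  moreover have "{\<omega> \<in> space M. Z k \<omega>} \<in> events" if "k < n" for k
  proof -
    have "Z k -` {True} \<inter> space M \<in> events"
      using indep_Z that by (auto simp: indep_vars_def measurable_count_space_eq2_countable)
    then show ?thesis
      by (simp add: vimage_def Int_def conj_commute)
  qed
  ultimately have prob_not_Z: "prob (Z k -` {False} \<inter> space M)
      = 1 - prob {\<omega> \<in> space M. X (2 * k) \<omega> \<in> A k} * prob {\<omega> \<in> space M. X (2 * k + 1) \<omega> \<in> B k}"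
    if "k < n" for k
    using that A B unfolding Z_def
    by (simp add: prob_compl indep_vars_prob_pair[OF indep])
  have "{\<omega> \<in> space M. \<forall>k<n. \<not> (X (2 * k) \<omega> \<in> A k \<and> X (2 * k + 1) \<omega> \<in> B k)}
      = (\<Inter>k\<in>{..<n}. Z k -` {False} \<inter> space M)"
  proof (intro equalityI subsetI)
    fix \<omega> assume "\<omega> \<in> (\<Inter>k\<in>{..<n}. Z k -` {False} \<inter> space M)"
    then have "\<omega> \<in> space M" "\<And>k. k < n \<Longrightarrow> \<not> Z k \<omega>"
      using False by blast+
    then show "\<omega> \<in> {\<omega> \<in> space M. \<forall>k<n. \<not> (X (2 * k) \<omega> \<in> A k \<and> X (2 * k + 1) \<omega> \<in> B k)}"
      by (simp add: Z_def)
  qed (simp add: Z_def)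
  also have "prob \<dots> = (\<Prod>k\<in>{..<n}. prob (Z k -` {False} \<inter> space M))"
    by (rule indep_varsD_finite[OF indep_Z]) (use False in auto)
  also have "\<dots> = (\<Prod>k<n. 1 - prob {\<omega> \<in> space M. X (2 * k) \<omega> \<in> A k} * prob {\<omega> \<in> space M. X (2 * k + 1) \<omega> \<in> B k})"
    by (intro prod.cong refl prob_not_Z) simp
  finally show ?thesis .
qed

lemma (in prob_space) AE_ex_independent_pair_event:
  fixes X :: "nat \<Rightarrow> 'a \<Rightarrow> 'b"
  assumes indep: "\<And>n. indep_vars N X {..<2 * n}"
    and A: "\<And>k. A k \<in> sets (N (2 * k))"
    and B: "\<And>k. B k \<in> sets (N (2 * k + 1))"
    and c: "c > 0"
    and c_le: "\<And>k. c \<le> prob {\<omega> \<in> space M. X (2 * k) \<omega> \<in> A k} * prob {\<omega> \<in> space M. X (2 * k + 1) \<omega> \<in> B k}"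
  shows "AE \<omega> in M. \<exists>k. X (2 * k) \<omega> \<in> A k \<and> X (2 * k + 1) \<omega> \<in> B k"
proof -
  let ?p = "\<lambda>k. prob {\<omega> \<in> space M. X (2 * k) \<omega> \<in> A k} * prob {\<omega> \<in> space M. X (2 * k + 1) \<omega> \<in> B k}"
  let ?E = "\<lambda>n. {\<omega> \<in> space M. \<forall>k<n. \<not> (X (2 * k) \<omega> \<in> A k \<and> X (2 * k + 1) \<omega> \<in> B k)}"
  have [measurable]: "X i \<in> measurable M (N i)" for i
    using indep[of "Suc i"] by (auto simp: indep_vars_def)
  have [measurable]: "A k \<in> sets (N (2 * k))" "B k \<in> sets (N (2 * k + 1))" for k
    using A B by auto
  have E_events: "?E n \<in> events" for n
    by measurable
  have E_inf_events: "{\<omega> \<in> space M. \<forall>k. \<not> (X (2 * k) \<omega> \<in> A k \<and> X (2 * k + 1) \<omega> \<in> B k)} \<in> events"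
    by measurable
  have p_le_1: "?p k \<le> 1" for k
    by (intro mult_le_one) auto
  have E_le: "prob {\<omega> \<in> space M. \<forall>k. \<not> (X (2 * k) \<omega> \<in> A k \<and> X (2 * k + 1) \<omega> \<in> B k)} \<le> (1 - c) ^ n" for n
  proof -
    have "prob {\<omega> \<in> space M. \<forall>k. \<not> (X (2 * k) \<omega> \<in> A k \<and> X (2 * k + 1) \<omega> \<in> B k)} \<le> prob (?E n)"
      using E_events by (rule finite_measure_mono[rotated]) auto
    also have "\<dots> = (\<Prod>k<n. 1 - ?p k)"
      using indep A B by (rule prob_no_independent_pair_event)
    also have "\<dots> \<le> (\<Prod>k<n. 1 - c)"
      using c_le p_le_1 by (intro prod_mono) (auto simp: algebra_simps)
    finally show ?thesis by simp
  qed
  have "(\<lambda>n. (1 - c) ^ n) \<longlonglongrightarrow> 0"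
    using c c_le[of 0] p_le_1[of 0] by (intro LIMSEQ_power_zero) auto
  then have "prob {\<omega> \<in> space M. \<forall>k. \<not> (X (2 * k) \<omega> \<in> A k \<and> X (2 * k + 1) \<omega> \<in> B k)} = 0"
    using E_le measure_nonneg by (intro antisym LIMSEQ_le_const) auto
  then show ?thesis
    by (subst (asm) prob_Collect_eq_0[OF E_inf_events]) simp
qed

section \<open>Brownian increments on the triadic grid\<close>

lemma
  assumes "std_brownian_motion M W"
  shows std_brownian_motion_prob_space: "prob_space M"
    and std_brownian_motion_measurable: "t \<ge> 0 \<Longrightarrow> W t \<in> borel_measurable M"
    and std_brownian_motion_continuous: "\<omega> \<in> space M \<Longrightarrow> continuous_on {0..} (\<lambda>t. W t \<omega>)"
    and std_brownian_motion_increment_distributed: "0 \<le> s \<Longrightarrow> s < t \<Longrightarrow>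
      distributed M lborel (\<lambda>\<omega>. W t \<omega> - W s \<omega>)
        (\<lambda>x. ennreal (\<Prod>i\<in>UNIV. normal_density 0 (sqrt (t - s)) (x $ i)))"
    and std_brownian_motion_indep_increments: "0 \<le> ts 0 \<Longrightarrow> (\<forall>i<n. ts i < ts (Suc i)) \<Longrightarrow>
      prob_space.indep_vars M (\<lambda>_. borel) (\<lambda>i \<omega>. W (ts (Suc i)) \<omega> - W (ts i) \<omega>) {..<n}"
  using assms unfolding std_brownian_motion_def by blast+

lemma std_brownian_motion_increment_prob:
  fixes W :: "real \<Rightarrow> 'a \<Rightarrow> real ^ 'p"
  assumes W: "std_brownian_motion M W" and st: "0 \<le> s" "s < t" and B: "B \<in> sets borel"
  shows "measure M {\<omega> \<in> space M. (W t \<omega> - W s \<omega>) /\<^sub>R sqrt (t - s) \<in> B} = measure std_normal_vec B"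
  unfolding measure_def using st B
  by (simp add: emeasure_distributed_normal_vec_scaled std_brownian_motion_increment_distributed[OF W])

definition triadic_grid :: "nat \<Rightarrow> real" where
  "triadic_grid i = (if even i then 1 else 2) * 3 ^ (i div 2)"

lemma triadic_grid_even: "triadic_grid (2 * k) = 3 ^ k"
  by (simp add: triadic_grid_def)

lemma triadic_grid_Suc_even: "triadic_grid (Suc (2 * k)) = 2 * 3 ^ k"
  by (simp add: triadic_grid_def)

lemma triadic_grid_Suc_Suc_even: "triadic_grid (Suc (Suc (2 * k))) = 3 * 3 ^ k"
proof -
  have "Suc (Suc (2 * k)) = 2 * Suc k" by simp
  then show ?thesis by (simp only: triadic_grid_even) simp
qed

lemma triadic_grid_less_Suc: "triadic_grid i < triadic_grid (Suc i)"
proof (cases "even i")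
  case True
  then obtain k where "i = 2 * k" by blast
  then show ?thesis by (simp add: triadic_grid_even triadic_grid_Suc_even)
next
  case False
  then obtain k where "i = Suc (2 * k)" by (metis oddE Suc_eq_plus1)
  then show ?thesis by (simp add: triadic_grid_Suc_even triadic_grid_Suc_Suc_even)
qed

lemma std_brownian_motion_AE_large_then_small_increment:
  fixes W :: "real \<Rightarrow> 'a \<Rightarrow> real ^ 'p"
  assumes W: "std_brownian_motion M W" and b: "b > 0"
  shows "AE \<omega> in M. \<exists>k. a * sqrt (3 ^ k) < norm (W (2 * 3 ^ k) \<omega> - W (3 ^ k) \<omega>)
                     \<and> norm (W (3 * 3 ^ k) \<omega> - W (2 * 3 ^ k) \<omega>) \<le> b * sqrt (3 ^ k)"
proof -
  interpret prob_space M by (rule std_brownian_motion_prob_space[OF W])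
  define X where "X i \<omega> = W (triadic_grid (Suc i)) \<omega> - W (triadic_grid i) \<omega>" for i \<omega>
  have X_even: "X (2 * k) \<omega> = W (2 * 3 ^ k) \<omega> - W (3 ^ k) \<omega>" for k \<omega>
    by (simp add: X_def triadic_grid_even triadic_grid_Suc_even)
  have X_odd: "X (2 * k + 1) \<omega> = W (3 * 3 ^ k) \<omega> - W (2 * 3 ^ k) \<omega>" for k \<omega>
    by (simp add: X_def triadic_grid_Suc_even triadic_grid_Suc_Suc_even)
  have indep: "indep_vars (\<lambda>_. borel) X {..<2 * n}" for n
    unfolding X_def using triadic_grid_less_Suc
    by (intro std_brownian_motion_indep_increments[OF W]) (auto simp: triadic_grid_def)
  define B1 where "B1 = {y :: real ^ 'p. a < norm y}"
  define B2 where "B2 = {y :: real ^ 'p. norm y \<le> b}"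
  have B_borel: "B1 \<in> sets borel" "B2 \<in> sets borel"
    unfolding B1_def B2_def by measurable
  have event1: "{\<omega> \<in> space M. X (2 * k) \<omega> \<in> {x. a * sqrt (3 ^ k) < norm x}}
      = {\<omega> \<in> space M. (W (2 * 3 ^ k) \<omega> - W (3 ^ k) \<omega>) /\<^sub>R sqrt (2 * 3 ^ k - 3 ^ k) \<in> B1}" for k
    unfolding X_even by (simp add: B1_def pos_less_divide_eq divide_inverse_commute[symmetric])
  have event2: "{\<omega> \<in> space M. X (2 * k + 1) \<omega> \<in> {x. norm x \<le> b * sqrt (3 ^ k)}}
      = {\<omega> \<in> space M. (W (3 * 3 ^ k) \<omega> - W (2 * 3 ^ k) \<omega>) /\<^sub>R sqrt (3 * 3 ^ k - 2 * 3 ^ k) \<in> B2}" for k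
    unfolding X_odd by (simp add: B2_def pos_divide_le_eq divide_inverse_commute[symmetric])
  define c where "c = measure std_normal_vec B1 * measure std_normal_vec B2"
  have prob_pair: "prob {\<omega> \<in> space M. X (2 * k) \<omega> \<in> {x. a * sqrt (3 ^ k) < norm x}}
      * prob {\<omega> \<in> space M. X (2 * k + 1) \<omega> \<in> {x. norm x \<le> b * sqrt (3 ^ k)}} = c" for k
    unfolding event1 event2 c_def using B_borel
      std_brownian_motion_increment_prob[OF W, of "3 ^ k" "2 * 3 ^ k" B1]
      std_brownian_motion_increment_prob[OF W, of "2 * 3 ^ k" "3 * 3 ^ k" B2]
    by simp
  obtain y0 :: "real ^ 'p" where y0: "norm y0 = \<bar>a\<bar> + 1"
    using vector_choose_size[of "\<bar>a\<bar> + 1"] by auto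
  have "ball y0 1 \<subseteq> B1"
  proof
    fix y assume "y \<in> ball y0 1"
    then have "norm y0 - norm y < 1"
      using norm_triangle_ineq2[of y0 y] by (simp add: dist_norm)
    with y0 show "y \<in> B1" by (simp add: B1_def)
  qed
  moreover have "ball 0 b \<subseteq> B2"
    by (auto simp: B2_def)
  ultimately have "c > 0"
    using B_borel b by (simp add: c_def measure_std_normal_vec_pos)
  with indep prob_pair have "AE \<omega> in M. \<exists>k. X (2 * k) \<omega> \<in> {x. a * sqrt (3 ^ k) < norm x}
                              \<and> X (2 * k + 1) \<omega> \<in> {x. norm x \<le> b * sqrt (3 ^ k)}"
    by (intro AE_ex_independent_pair_event[where c = c]) auto
  then show ?thesis
    unfolding X_even X_odd by simp
qed

theorem proposition2p2:
  fixes M :: "'a measure" and W :: "real \<Rightarrow> 'a \<Rightarrow> real ^ 'p" and K :: real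
  assumes "std_brownian_motion M W"
    and "K > 0"
  shows "measure M {\<omega> \<in> space M.
           (SUP (s, t) \<in> {(s, t). 1 \<le> s \<and> s \<le> t}.
              ereal (t powr (-3/2) * normI (t *\<^sub>R W s \<omega> - s *\<^sub>R W t \<omega>))) \<ge> ereal K} = 1"
proof -
  interpret prob_space M by (rule std_brownian_motion_prob_space[OF assms(1)])
  have "AE \<omega> in M. \<exists>k. (12 * K * sqrt (real CARD('p)) + 1) * sqrt (3 ^ k) < norm (W (2 * 3 ^ k) \<omega> - W (3 ^ k) \<omega>)
                     \<and> norm (W (3 * 3 ^ k) \<omega> - W (2 * 3 ^ k) \<omega>) \<le> 1 * sqrt (3 ^ k)"
    by (rule std_brownian_motion_AE_large_then_small_increment[OF assms(1)]) simp
  then have "AE \<omega> in M. ereal K \<le> scaled_bridge_sup (\<lambda>t. W t \<omega>)"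
  proof (rule eventually_mono, elim exE conjE)
    fix \<omega> k
    assume "(12 * K * sqrt (real CARD('p)) + 1) * sqrt (3 ^ k) < norm (W (2 * 3 ^ k) \<omega> - W (3 ^ k) \<omega>)"
      and "norm (W (3 * 3 ^ k) \<omega> - W (2 * 3 ^ k) \<omega>) \<le> 1 * sqrt (3 ^ k)"
    then show "ereal K \<le> scaled_bridge_sup (\<lambda>t. W t \<omega>)"
      by (intro scaled_bridge_sup_ge_if_large_then_small_increment[where w = "\<lambda>t. W t \<omega>" and s = "3 ^ k"])
        simp_all
  qed
  moreover have "{\<omega> \<in> space M. ereal K \<le> scaled_bridge_sup (\<lambda>t. W t \<omega>)} \<in> events"
    using borel_measurable_scaled_bridge_sup[OF std_brownian_motion_measurable[OF assms(1)]
        std_brownian_motion_continuous[OF assms(1)]]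
    by measurable
  ultimately show ?thesis
    by (simp add: prob_Collect_eq_1 scaled_bridge_sup_def)
qed

end
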